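(* Let $(\alpha,\beta,\gamma,\delta)\in\mathbb{C}^4$ with $\gamma\neq0$ or $\delta\neq0$. The quartic surface $\mathrm{Q}(\alpha,\beta,\gamma,\delta)\subset\mathbb{P}^3(x,y,z,w)$, $y^2zw-4x^3z+3\alpha xzw^2+\beta zw^3+\gamma xz^2w-\tfrac12(\delta z^2w^2+w^4)=0$, has a singular point other than $[0,1,0,0]$ and $[0,0,1,0]$ if and only if $\mathcal{D}_4(\alpha,\beta,\gamma,\delta)=0$, where $$\begin{aligned}\mathcal{D}_4=\;&-2^53^6\alpha^6\beta\gamma^3+2^63^6\alpha^3\beta^3\gamma^3-2^53^6\beta^5\gamma^3-2^43^5\alpha^5\gamma^4+2^43^55^2\alpha^2\beta^2\gamma^4+2\cdot3^35^4\alpha\beta\gamma^5+5^5\gamma^6\\&-2^43^7\alpha^7\gamma^2\delta+2^53^7\alpha^4\beta^2\gamma^2\delta-2^43^7\alpha\beta^4\gamma^2\delta+2^33^5\cdot5\cdot19\,\alpha^3\beta\gamma^3\delta+2^33^55^2\beta^3\gamma^3\delta+3^35^3\cdot11\,\alpha^2\gamma^4\delta\\&+2^33^5\cdot37\,\alpha^4\gamma^2\delta^2+2^33^5\cdot5\cdot7\,\alpha\beta^2\gamma^2\delta^2-2^33^35^3\beta\gamma^3\delta^2+2^43^6\alpha^6\delta^3-2^53^6\alpha^3\beta^2\delta^3+2^43^6\beta^4\delta^3\\&-2^63^6\alpha^2\beta\gamma\delta^3-2^33^55^2\alpha\gamma^2\delta^3-2^53^6\alpha^3\delta^4-2^53^6\beta^2\delta^4+2^43^6\delta^5.\end{aligned}$$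 *)

theory Defs
  imports "HOL-Analysis.Analysis"
begin

definition Qform :: "complex \<Rightarrow> complex \<Rightarrow> complex \<Rightarrow> complex \<Rightarrow>
    complex \<Rightarrow> complex \<Rightarrow> complex \<Rightarrow> complex \<Rightarrow> complex" where
  "Qform a b c d x y z w =
     y^2*z*w - 4*x^3*z + 3*a*x*z*w^2 + b*z*w^3 + c*x*z^2*w - (d*z^2*w^2 + w^4)/2"

definition singular_point :: "complex \<Rightarrow> complex \<Rightarrow> complex \<Rightarrow> complex \<Rightarrow>
    complex \<Rightarrow> complex \<Rightarrow> complex \<Rightarrow> complex \<Rightarrow> bool" where
  "singular_point a b c d x y z w \<longleftrightarrow>
     (x, y, z, w) \<noteq> (0, 0, 0, 0) \<and>
     Qform a b c d x y z w = 0 \<and>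
     deriv (\<lambda>t. Qform a b c d t y z w) x = 0 \<and>
     deriv (\<lambda>t. Qform a b c d x t z w) y = 0 \<and>
     deriv (\<lambda>t. Qform a b c d x y t w) z = 0 \<and>
     deriv (\<lambda>t. Qform a b c d x y z t) w = 0"

definition proj_eq :: "complex \<times> complex \<times> complex \<times> complex \<Rightarrow>
    complex \<times> complex \<times> complex \<times> complex \<Rightarrow> bool" where
  "proj_eq p q \<longleftrightarrow> (\<exists>t::complex. t \<noteq> 0 \<and>
     p = (t * fst q, t * fst (snd q), t * fst (snd (snd q)), t * snd (snd (snd q))))"

definition D4 :: "complex \<Rightarrow> complex \<Rightarrow> complex \<Rightarrow> complex \<Rightarrow> complex" where
  "D4 a b c d =
   - (2^5*3^6*a^6*b*c^3) + 2^6*3^6*a^3*b^3*c^3 - 2^5*3^6*b^5*c^3 - 2^4*3^5*a^5*c^4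
   + 2^4*3^5*5^2*a^2*b^2*c^4 + 2*3^3*5^4*a*b*c^5 + 5^5*c^6
   - 2^4*3^7*a^7*c^2*d + 2^5*3^7*a^4*b^2*c^2*d - 2^4*3^7*a*b^4*c^2*d
   + 2^3*3^5*5*19*a^3*b*c^3*d + 2^3*3^5*5^2*b^3*c^3*d + 3^3*5^3*11*a^2*c^4*d
   + 2^3*3^5*37*a^4*c^2*d^2 + 2^3*3^5*5*7*a*b^2*c^2*d^2 - 2^3*3^3*5^3*b*c^3*d^2
   + 2^4*3^6*a^6*d^3 - 2^5*3^6*a^3*b^2*d^3 + 2^4*3^6*b^4*d^3
   - 2^6*3^6*a^2*b*c*d^3 - 2^3*3^5*5^2*a*c^2*d^3
   - 2^5*3^6*a^3*d^4 - 2^5*3^6*b^2*d^4 + 2^4*3^6*d^5"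

end

theory Submission
  imports Defs "HOL-Computational_Algebra.Fundamental_Theorem_Algebra"
begin

(* A singular point with
      w = 0 is forced to be [0,1,0,0] or [0,0,1,0]; a singular point with w \<noteq> 0 has
      z \<noteq> 0 and y = 0, so after dehomogenising (w = 1, y = 0) the singular points off the
      two special points correspond exactly to the solutions (x,z) of a system of three
      affine equations E1 = E2 = E3 = 0 (F_x/z, F_z and F_w at w = 1, y = 0), which is
      the predicate affine_system below.
   2. If c \<noteq> 0, E1 determines z linearly, c*E2 becomes a cubic P(x) and c^2*E3 a quintic
      Q(x); the system is solvable iff P and the remainder R of Q modulo P have a common
      root.  The classical resultant of a cubic and a quadratic decides this, and for P, R
      it equals -250000 c^8 D4.
   3. If c = 0 and d \<noteq> 0, the system reduces to 4x^2 = a and 4abx = d - a^3 - b^2, which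
      is solvable iff (d - a^3 - b^2)^2 = 4a^3b^2; here D4 = 2^4 3^6 d^3 times that
      difference. *)


lemma Qform_deriv_x:
  "deriv (\<lambda>t. Qform a b c d t y z w) x = z * (3*a*w^2 + c*z*w - 12*x^2)"
  unfolding Qform_def
  by (rule DERIV_imp_deriv)
    (auto intro!: derivative_eq_intros simp: algebra_simps power2_eq_square power3_eq_cube)

lemma Qform_deriv_y:
  "deriv (\<lambda>t. Qform a b c d x t z w) y = 2*y*z*w"
  unfolding Qform_def
  by (rule DERIV_imp_deriv)
    (auto intro!: derivative_eq_intros simp: algebra_simps power2_eq_square power3_eq_cube)

lemma Qform_deriv_z:
  "deriv (\<lambda>t. Qform a b c d x y t w) z =
     y^2*w - 4*x^3 + 3*a*x*w^2 + b*w^3 + 2*c*x*z*w - d*z*w^2"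
  unfolding Qform_def
  by (rule DERIV_imp_deriv)
    (auto intro!: derivative_eq_intros simp: algebra_simps power2_eq_square power3_eq_cube)

lemma Qform_deriv_w:
  "deriv (\<lambda>t. Qform a b c d x y z t) w =
     y^2*z + 6*a*x*z*w + 3*b*z*w^2 + c*x*z^2 - d*z^2*w - 2*w^3"
  unfolding Qform_def
  by (rule DERIV_imp_deriv)
    (auto intro!: derivative_eq_intros simp: algebra_simps power2_eq_square power3_eq_cube)

lemma singular_point_iff:
  "singular_point a b c d x y z w \<longleftrightarrow> (x, y, z, w) \<noteq> (0, 0, 0, 0) \<and>
     Qform a b c d x y z w = 0 \<and>
     z * (3*a*w^2 + c*z*w - 12*x^2) = 0 \<and>
     2*y*z*w = 0 \<and>
     y^2*w - 4*x^3 + 3*a*x*w^2 + b*w^3 + 2*c*x*z*w - d*z*w^2 = 0 \<and>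
     y^2*z + 6*a*x*z*w + 3*b*z*w^2 + c*x*z^2 - d*z^2*w - 2*w^3 = 0"
  unfolding singular_point_def Qform_deriv_x Qform_deriv_y Qform_deriv_z Qform_deriv_w ..


section \<open>Reduction to an affine system\<close>

text \<open>The equations F_x/z, F_z, F_w in the affine chart w = 1, restricted to y = 0.\<close>
definition affine_system :: "complex \<Rightarrow> complex \<Rightarrow> complex \<Rightarrow> complex \<Rightarrow>
    complex \<Rightarrow> complex \<Rightarrow> bool" where
  "affine_system a b c d x z \<longleftrightarrow>
     3*a + c*z - 12*x^2 = 0 \<and>
     - 4*x^3 + 3*a*x + b + 2*c*x*z - d*z = 0 \<and>
     6*a*x*z + 3*b*z + c*x*z^2 - d*z^2 - 2 = 0"

lemma singular_point_at_infinity: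
  assumes "singular_point a b c d x y z 0"
  shows "proj_eq (x, y, z, 0) (0, 1, 0, 0) \<or> proj_eq (x, y, z, 0) (0, 0, 1, 0)"
proof -
  note eqs = assms[unfolded singular_point_iff]
  have x: "x = 0" using eqs by simp
  then have "y = 0 \<or> z = 0" using eqs by simp
  then show ?thesis
  proof
    assume "y = 0"
    then have "proj_eq (x, y, z, 0) (0, 0, 1, 0)"
      using x eqs unfolding proj_eq_def by auto
    then show ?thesis ..
  next
    assume "z = 0"
    then have "proj_eq (x, y, z, 0) (0, 1, 0, 0)"
      using x eqs unfolding proj_eq_def by auto
    then show ?thesis ..
  qed
qed

lemma singular_point_dehomogenise:
  assumes sing: "singular_point a b c d x y z w" and w: "w \<noteq> 0"
  shows "affine_system a b c d (x/w) (z/w)"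
proof -
  note eqs = sing[unfolded singular_point_iff]
  have z: "z \<noteq> 0"
  proof
    assume "z = 0"
    then have "w^3 = 0" using eqs by simp
    then show False using w by simp
  qed
  have y: "y = 0" using eqs z w by simp
  have Fx: "z * (3*a*w^2 + c*z*w - 12*x^2) = 0"
    and Fz: "- 4*x^3 + 3*a*x*w^2 + b*w^3 + 2*c*x*z*w - d*z*w^2 = 0"
    and Fw: "6*a*x*z*w + 3*b*z*w^2 + c*x*z^2 - d*z^2*w - 2*w^3 = 0"
    using eqs y by simp_all
  define X Z where "X = x/w" and "Z = z/w"
  have x_eq: "x = X*w" and z_eq: "z = Z*w" using w unfolding X_def Z_def by simp_all
  have "z * w^2 * (3*a + c*Z - 12*X^2) = 0"
    using Fx unfolding x_eq z_eq by algebra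
  then have e1: "3*a + c*Z - 12*X^2 = 0" using w z by simp
  have "w^3 * (- 4*X^3 + 3*a*X + b + 2*c*X*Z - d*Z) = 0"
    using Fz unfolding x_eq z_eq by algebra
  then have e2: "- 4*X^3 + 3*a*X + b + 2*c*X*Z - d*Z = 0" using w by simp
  have "w^3 * (6*a*X*Z + 3*b*Z + c*X*Z^2 - d*Z^2 - 2) = 0"
    using Fw unfolding x_eq z_eq by algebra
  then have e3: "6*a*X*Z + 3*b*Z + c*X*Z^2 - d*Z^2 - 2 = 0" using w by simp
  show ?thesis using e1 e2 e3 unfolding affine_system_def X_def Z_def by blast
qed

text \<open>Conversely every solution of the affine system is a singular point [x,0,z,1]; the
  equation F = 0 itself follows from Euler's identity 4F = xF_x + yF_y + zF_z + wF_w.\<close>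
lemma affine_system_singular_point:
  assumes "affine_system a b c d x z"
  shows "singular_point a b c d x 0 z 1"
  using assms unfolding singular_point_iff affine_system_def Qform_def
  by (simp add: field_simps) algebra

lemma singular_points_off_special_iff:
  "(\<exists>x y z w. singular_point a b c d x y z w \<and>
       \<not> proj_eq (x, y, z, w) (0, 1, 0, 0) \<and> \<not> proj_eq (x, y, z, w) (0, 0, 1, 0))
   \<longleftrightarrow> (\<exists>x z. affine_system a b c d x z)"
proof
  assume "\<exists>x y z w. singular_point a b c d x y z w \<and>
       \<not> proj_eq (x, y, z, w) (0, 1, 0, 0) \<and> \<not> proj_eq (x, y, z, w) (0, 0, 1, 0)"
  then obtain x y z w where sing: "singular_point a b c d x y z w"
    and off: "\<not> proj_eq (x, y, z, w) (0, 1, 0, 0)" "\<not> proj_eq (x, y, z, w) (0, 0, 1, 0)"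
    by blast
  have "w \<noteq> 0" using singular_point_at_infinity[of a b c d x y z] sing off by auto
  then show "\<exists>x z. affine_system a b c d x z"
    using singular_point_dehomogenise[OF sing] by blast
next
  assume "\<exists>x z. affine_system a b c d x z"
  then obtain x z where "affine_system a b c d x z" by blast
  moreover have "\<not> proj_eq (x, 0, z, 1) (0, 1, 0, 0)" "\<not> proj_eq (x, 0, z, 1) (0, 0, 1, 0)"
    unfolding proj_eq_def by auto
  ultimately show "\<exists>x y z w. singular_point a b c d x y z w \<and>
       \<not> proj_eq (x, y, z, w) (0, 1, 0, 0) \<and> \<not> proj_eq (x, y, z, w) (0, 0, 1, 0)"
    using affine_system_singular_point by blast
qed


section \<open>Common roots of a cubic and a quadratic\<close>

lemma cubic_vieta:
  fixes L A B C :: complex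
  assumes L: "L \<noteq> 0"
  obtains r1 r2 r3 where
    "A = - L*(r1 + r2 + r3)" "B = L*(r1*r2 + r1*r3 + r2*r3)" "C = - L*r1*r2*r3"
proof -
  define p q r where "p = A/L" and "q = B/L" and "r = C/L"
  have "\<exists>t. poly [:r, q, p, 1:] t = 0"
    by (rule fundamental_theorem_of_algebra_alt) simp
  then obtain r1 where r1: "r + r1*(q + r1*(p + r1)) = 0" by auto
  text \<open>Dividing by (t - r1) leaves the monic quadratic t^2 + k1 t + k0.\<close>
  define k1 k0 where "k1 = p + r1" and "k0 = q + r1*k1"
  define disc where "disc = csqrt (k1^2 - 4*k0)"
  have disc_sq: "disc^2 = k1^2 - 4*k0" unfolding disc_def by simp
  define r2 r3 where "r2 = (- k1 + disc)/2" and "r3 = (- k1 - disc)/2"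
  have sum: "r2 + r3 = - k1" unfolding r2_def r3_def by (simp add: field_simps)
  have prod: "r2 * r3 = k0"
    unfolding r2_def r3_def using disc_sq by (simp add: field_simps power2_eq_square)
  have vieta1: "r1 + r2 + r3 = - p" using sum unfolding k1_def by (simp add: algebra_simps)
  have vieta2: "r1*r2 + r1*r3 + r2*r3 = q" using sum prod unfolding k0_def k1_def by algebra
  have vieta3: "r1*r2*r3 = - r" using prod r1 unfolding k0_def k1_def by algebra
  show ?thesis
  proof (rule that)
    show "A = - L*(r1 + r2 + r3)" using vieta1 L unfolding p_def by simp
    show "B = L*(r1*r2 + r1*r3 + r2*r3)" using vieta2 L unfolding q_def by simp
    show "C = - L*r1*r2*r3" using vieta3 L unfolding r_def by (simp add: mult.assoc)
  qed
qed

text \<open>The resultant of L t^3 + A t^2 + B t + C and E t^2 + G t + H.\<close>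
definition cq_resultant :: "complex \<Rightarrow> complex \<Rightarrow> complex \<Rightarrow> complex \<Rightarrow>
    complex \<Rightarrow> complex \<Rightarrow> complex \<Rightarrow> complex" where
  "cq_resultant L A B C E G H =
     L^2*H^3 - L*A*G*H^2 - 2*L*B*E*H^2 + L*B*G^2*H + 3*L*C*E*G*H - L*C*G^3
     + A^2*E*H^2 - A*B*E*G*H - 2*A*C*E^2*H + A*C*E*G^2 + B^2*E^2*H - B*C*E^2*G + C^2*E^3"

lemma cq_resultant_roots:
  fixes L E G H r1 r2 r3 :: complex
  shows "cq_resultant L (- L*(r1 + r2 + r3)) (L*(r1*r2 + r1*r3 + r2*r3)) (- L*r1*r2*r3) E G H
       = L^2 * (E*r1^2 + G*r1 + H) * (E*r2^2 + G*r2 + H) * (E*r3^2 + G*r3 + H)"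
  unfolding cq_resultant_def by algebra

lemma cubic_quadratic_common_root:
  fixes L A B C E G H :: complex
  assumes L: "L \<noteq> 0"
  shows "(\<exists>t. L*t^3 + A*t^2 + B*t + C = 0 \<and> E*t^2 + G*t + H = 0)
           \<longleftrightarrow> cq_resultant L A B C E G H = 0"
proof -
  obtain r1 r2 r3 where coeffs:
    "A = - L*(r1 + r2 + r3)" "B = L*(r1*r2 + r1*r3 + r2*r3)" "C = - L*r1*r2*r3"
    using cubic_vieta[OF L] .
  have "L*t^3 + A*t^2 + B*t + C = L*((t - r1)*(t - r2)*(t - r3))" for t
    unfolding coeffs by algebra
  then have roots: "L*t^3 + A*t^2 + B*t + C = 0 \<longleftrightarrow> t = r1 \<or> t = r2 \<or> t = r3" for t
    using L by simp
  show ?thesis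
    unfolding coeffs cq_resultant_roots using L roots[unfolded coeffs] by auto
qed


section \<open>The case c \<noteq> 0\<close>

text \<open>Substituting z = (12x^2 - 3a)/c (the solution of the first affine equation) turns c
  times the second equation into the cubic below, and c^2 times the third into a quintic
  whose remainder modulo the cubic is the quadratic below.\<close>
definition elim_cubic ::
    "complex \<Rightarrow> complex \<Rightarrow> complex \<Rightarrow> complex \<Rightarrow> complex \<Rightarrow> complex" where
  "elim_cubic a b c d x = 20*c*x^3 + (-12*d)*x^2 + (-3*a*c)*x + (b*c + 3*a*d)"

definition elim_remainder ::
    "complex \<Rightarrow> complex \<Rightarrow> complex \<Rightarrow> complex \<Rightarrow> complex \<Rightarrow> complex" where
  "elim_remainder a b c d x =
     (3420*a*c^2*d + 1800*b*c^3 - 1296*d^3)*x^2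
     + (-360*a^2*c^3 + 216*a*c*d^2 + 180*b*c^2*d)*x
     + (-765*a^2*c^2*d - 630*a*b*c^3 + 324*a*d^3 + 108*b*c*d^2 - 125*c^4)"

text \<open>Elimination of z: the affine system is solvable iff the cubic and the remainder have
  a common root; the division identity below is Q = quotient * cubic + remainder.\<close>
lemma affine_system_elim_z:
  fixes a b c d :: complex
  assumes c: "c \<noteq> 0"
  shows "(\<exists>x z. affine_system a b c d x z)
           \<longleftrightarrow> (\<exists>x. elim_cubic a b c d x = 0 \<and> elim_remainder a b c d x = 0)"
proof -
  define Q where "Q x = 144*x^5*c - 144*x^4*d + 72*x^2*a*d + 36*x^2*b*c
                        - 9*x*a^2*c - 9*a^2*d - 9*a*b*c - 2*c^2" for x
  have division: "(20*c)^3 * Q x =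
      (57600*c^3*x^2 - 23040*c^2*d*x + 8640*a*c^3 - 13824*c*d^2) * elim_cubic a b c d x
      + 128*c * elim_remainder a b c d x" for x
    unfolding Q_def elim_cubic_def elim_remainder_def by algebra
  show ?thesis
  proof
    assume "\<exists>x z. affine_system a b c d x z"
    then obtain x z where sys: "affine_system a b c d x z" by blast
    have P: "elim_cubic a b c d x = 0"
      using sys unfolding affine_system_def elim_cubic_def by algebra
    have "Q x = 0" using sys unfolding affine_system_def Q_def by algebra
    then have "elim_remainder a b c d x = 0" using division[of x] P c by simp
    with P show "\<exists>x. elim_cubic a b c d x = 0 \<and> elim_remainder a b c d x = 0" by blast
  next
    assume "\<exists>x. elim_cubic a b c d x = 0 \<and> elim_remainder a b c d x = 0"
    then obtain x where P: "elim_cubic a b c d x = 0" and R: "elim_remainder a b c d x = 0"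
      by blast
    have Q: "Q x = 0" using division[of x] P R c by simp
    define z where "z = (12*x^2 - 3*a)/c"
    have z_eq: "c*z = 12*x^2 - 3*a" using c unfolding z_def by simp
    have "c * (- 4*x^3 + 3*a*x + b + 2*c*x*z - d*z) = 0"
      using z_eq P unfolding elim_cubic_def by algebra
    moreover have "c^2 * (6*a*x*z + 3*b*z + c*x*z^2 - d*z^2 - 2) = 0"
      using z_eq Q unfolding Q_def by algebra
    ultimately have "affine_system a b c d x z"
      using z_eq c unfolding affine_system_def by simp
    then show "\<exists>x z. affine_system a b c d x z" by blast
  qed
qed

lemma D4_as_resultant:
  fixes a b c d :: complex
  shows "cq_resultant (20*c) (-12*d) (-3*a*c) (b*c + 3*a*d)
           (3420*a*c^2*d + 1800*b*c^3 - 1296*d^3)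
           (-360*a^2*c^3 + 216*a*c*d^2 + 180*b*c^2*d)
           (-765*a^2*c^2*d - 630*a*b*c^3 + 324*a*d^3 + 108*b*c*d^2 - 125*c^4)
         = -250000 * c^8 * D4 a b c d"
  unfolding cq_resultant_def D4_def by algebra

lemma case_c_nonzero:
  fixes a b c d :: complex
  assumes c: "c \<noteq> 0"
  shows "(\<exists>x z. affine_system a b c d x z) \<longleftrightarrow> D4 a b c d = 0"
proof -
  have "20*c \<noteq> 0" using c by simp
  from cubic_quadratic_common_root[OF this, of "-12*d" "-3*a*c" "b*c + 3*a*d"
      "3420*a*c^2*d + 1800*b*c^3 - 1296*d^3" "-360*a^2*c^3 + 216*a*c*d^2 + 180*b*c^2*d"
      "-765*a^2*c^2*d - 630*a*b*c^3 + 324*a*d^3 + 108*b*c*d^2 - 125*c^4"]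
  have "(\<exists>x. elim_cubic a b c d x = 0 \<and> elim_remainder a b c d x = 0)
          \<longleftrightarrow> -250000 * c^8 * D4 a b c d = 0"
    unfolding elim_cubic_def elim_remainder_def D4_as_resultant .
  then show ?thesis using affine_system_elim_z[OF c] c by simp
qed


section \<open>The case c = 0, d \<noteq> 0\<close>

lemma exists_sqrt_on_line:
  fixes s m v :: complex
  shows "(\<exists>x. x^2 = s \<and> m*x = v) \<longleftrightarrow> (v^2 = m^2 * s \<and> (m = 0 \<longrightarrow> v = 0))"
proof
  assume "\<exists>x. x^2 = s \<and> m*x = v"
  then obtain x where "x^2 = s" "m*x = v" by blast
  then show "v^2 = m^2 * s \<and> (m = 0 \<longrightarrow> v = 0)" by (auto simp: power_mult_distrib)
next
  assume v: "v^2 = m^2 * s \<and> (m = 0 \<longrightarrow> v = 0)"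
  show "\<exists>x. x^2 = s \<and> m*x = v"
  proof (cases "m = 0")
    case True
    then show ?thesis using v by (intro exI[of _ "csqrt s"]) simp
  next
    case False
    then show ?thesis using v
      by (intro exI[of _ "v/m"]) (simp add: power_divide)
  qed
qed

text \<open>For c = 0 the first equation gives a = 4x^2, the second d z = 2 a x + b, and then
  d times the third equation reads 2((2ax + b)^2 - d) = 0.\<close>
lemma affine_system_c_zero:
  fixes a b d :: complex
  assumes d: "d \<noteq> 0"
  shows "(\<exists>x z. affine_system a b 0 d x z)
           \<longleftrightarrow> (\<exists>x. x^2 = a/4 \<and> (4*a*b)*x = d - a^3 - b^2)"
proof
  assume "\<exists>x z. affine_system a b 0 d x z"
  then obtain x z where sys: "affine_system a b 0 d x z" by blast
  have a: "a = 4*x^2" using sys unfolding affine_system_def by simp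
  have dz: "d*z = 2*a*x + b" using sys a unfolding affine_system_def by algebra
  have "d * (4*a*b*x - (d - a^3 - b^2)) = 0"
    using sys dz a unfolding affine_system_def by algebra
  then show "\<exists>x. x^2 = a/4 \<and> (4*a*b)*x = d - a^3 - b^2" using a d by auto
next
  assume "\<exists>x. x^2 = a/4 \<and> (4*a*b)*x = d - a^3 - b^2"
  then obtain x where a: "a = 4*x^2" and line: "4*a*b*x = d - a^3 - b^2" by auto
  define z where "z = (2*a*x + b)/d"
  have dz: "d*z = 2*a*x + b" using d unfolding z_def by simp
  have "- 4*x^3 + 3*a*x + b - d*z = 0" using dz a by algebra
  moreover have "d * (6*a*x*z + 3*b*z - d*z^2 - 2) = 0" using dz a line by algebra
  ultimately have "affine_system a b 0 d x z" using a d unfolding affine_system_def by simp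
  then show "\<exists>x z. affine_system a b 0 d x z" by blast
qed

lemma case_c_zero:
  fixes a b d :: complex
  assumes d: "d \<noteq> 0"
  shows "(\<exists>x z. affine_system a b 0 d x z) \<longleftrightarrow> D4 a b 0 d = 0"
proof -
  have D4_eq: "D4 a b 0 d = 2^4*3^6*d^3 * ((d - a^3 - b^2)^2 - 4*a^3*b^2)"
    unfolding D4_def by simp algebra
  have scale: "(4*a*b)^2 * (a/4) = 4*a^3*b^2"
    by (simp add: power_mult_distrib power3_eq_cube power2_eq_square)
  have "(\<exists>x. x^2 = a/4 \<and> (4*a*b)*x = d - a^3 - b^2)
          \<longleftrightarrow> (d - a^3 - b^2)^2 = 4*a^3*b^2"
    unfolding exists_sqrt_on_line scale by auto
  then show ?thesis
    unfolding affine_system_c_zero[OF d] D4_eq using d by simp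
qed


theorem mainTheorem4:
  fixes a b c d :: complex
  assumes "c \<noteq> 0 \<or> d \<noteq> 0"
  shows "(\<exists>x y z w. singular_point a b c d x y z w \<and>
            \<not> proj_eq (x, y, z, w) (0, 1, 0, 0) \<and>
            \<not> proj_eq (x, y, z, w) (0, 0, 1, 0))
         \<longleftrightarrow> D4 a b c d = 0"
  unfolding singular_points_off_special_iff
  using assms case_c_nonzero case_c_zero by (cases "c = 0") auto

end
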